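(* Let $A,B:\mathcal K\to\mathcal K$ be linear maps such that $(A,B):\mathcal K\oplus\mathcal K\to\mathcal K$ has rank $\dim\mathcal K$ and $AB^\dagger$ is self-adjoint. Assume that $\det(A-\varkappa B)\neq0$ for some $\varkappa>0$. Then $\mathfrak S(i\varkappa;A,B)$ is self-adjoint. If $L\leq0$, then $\mathfrak S(i\varkappa;A,B)$ is a contraction for all $\varkappa>0$.
   Context: $\mathcal K$ is a finite-dimensional complex Hilbert space. For $\mathsf k\in\mathbb C$ with $\det(A+i\mathsf kB)\neq0$, $\mathfrak S(\mathsf k;A,B)=-(A+i\mathsf kB)^{-1}(A-i\mathsf kB)$; in particular $\mathfrak S(i\varkappa;A,B)=-(A-\varkappa B)^{-1}(A+\varkappa B)$. $P_{\ker B}$ denotes the orthogonal projection onto $\ker B$, $P^\perp_{\ker B}=\mathbb I-P_{\ker B}$, and $L=(B|_{\operatorname{Ran}B^\dagger})^{-1}AP^\perp_{\ker B}$, a self-adjoint operator on $\mathcal K$. *)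

theory Defs
  imports "HOL-Analysis.Analysis"
begin

text \<open>The finite-dimensional complex Hilbert space K is modelled as complex^'n
  (with 'n an arbitrary finite index type); linear maps K to K are matrices complex^'n^'n.\<close>

definition cinner :: "complex^'n \<Rightarrow> complex^'n \<Rightarrow> complex" where
  "cinner x y = (\<Sum>i\<in>UNIV. cnj (x $ i) * y $ i)"

definition madj :: "complex^'n^'m \<Rightarrow> complex^'m^'n" where
  "madj A = (\<chi> i j. cnj (A $ j $ i))"

definition cscale :: "complex \<Rightarrow> complex^'n^'m \<Rightarrow> complex^'n^'m" where
  "cscale c A = (\<chi> i j. c * A $ i $ j)"

definition self_adjoint :: "complex^'n^'n \<Rightarrow> bool" where
  "self_adjoint A \<longleftrightarrow> madj A = A"

definition contraction :: "complex^'n^'n \<Rightarrow> bool" where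
  "contraction S \<longleftrightarrow> (\<forall>x. norm (S *v x) \<le> norm x)"

definition Sfrak :: "complex \<Rightarrow> complex^'n^'n \<Rightarrow> complex^'n^'n \<Rightarrow> complex^'n^'n" where
  "Sfrak k A B = - (matrix_inv (A + cscale (\<i> * k) B) ** (A - cscale (\<i> * k) B))"

definition orth_proj :: "(complex^'n) set \<Rightarrow> complex^'n \<Rightarrow> complex^'n" where
  "orth_proj V x = (THE v. v \<in> V \<and> (\<forall>w\<in>V. cinner w (x - v) = 0))"

definition kernel :: "complex^'n^'m \<Rightarrow> (complex^'n) set" where
  "kernel B = {x. B *v x = 0}"

definition ran :: "complex^'n^'m \<Rightarrow> (complex^'m) set" where
  "ran B = range (\<lambda>x. B *v x)"

definition Pperp_ker :: "complex^'n^'n \<Rightarrow> complex^'n \<Rightarrow> complex^'n" where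
  "Pperp_ker B x = x - orth_proj (kernel B) x"

text \<open>L = (B restricted to Ran B^\<dagger>)^{-1} A P_{ker B}^\<bottom>, as an operator on K.\<close>
definition Lop :: "complex^'n^'n \<Rightarrow> complex^'n^'n \<Rightarrow> complex^'n \<Rightarrow> complex^'n" where
  "Lop A B x = (THE w. w \<in> ran (madj B) \<and> B *v w = A *v Pperp_ker B x)"

definition nonpos_op :: "(complex^'n \<Rightarrow> complex^'n) \<Rightarrow> bool" where
  "nonpos_op L \<longleftrightarrow> (\<forall>x. Im (cinner x (L x)) = 0 \<and> Re (cinner x (L x)) \<le> 0)"

end

theory Submission
  imports Defs
begin

text \<open>Write \<open>M = A - \<kappa>B\<close> and \<open>N = A + \<kappa>B\<close>, so that \<open>S(i\<kappa>) = -M\<inverse>N\<close>.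
  Self-adjointness of \<open>AB\<dagger>\<close> is exactly the identity \<open>NM\<dagger> = MN\<dagger>\<close>, which rewrites
  \<open>M\<inverse>N\<close> as \<open>N\<dagger>(M\<dagger>)\<inverse>\<close> and shows that \<open>S(i\<kappa>)\<close> is self-adjoint.
  On \<open>Ran B\<dagger>\<close> one has \<open>\<langle>B\<dagger>y, L B\<dagger>y\<rangle> = \<langle>A\<dagger>y, B\<dagger>y\<rangle>\<close>, so \<open>L \<le> 0\<close> gives
  \<open>Re \<langle>A\<dagger>y, B\<dagger>y\<rangle> \<le> 0\<close> and hence \<open>\<parallel>N\<dagger>y\<parallel> \<le> \<parallel>M\<dagger>y\<parallel>\<close> for every \<open>\<kappa> > 0\<close>.
  If \<open>M\<dagger>y = 0\<close>, then \<open>A\<dagger>y = \<kappa>B\<dagger>y\<close> turns this into \<open>\<kappa>\<parallel>B\<dagger>y\<parallel>\<^sup>2 \<le> 0\<close>, so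
  \<open>A\<dagger>y = B\<dagger>y = 0\<close>, i.e. \<open>y \<bottom> Ran (A, B) = \<K>\<close>: \<open>M\<close> is invertible. Finally, with
  \<open>z = M\<dagger>y\<close> the inequality reads \<open>\<parallel>S(i\<kappa>) z\<parallel> \<le> \<parallel>z\<parallel>\<close>.\<close>

lemma madj_madj [simp]: "madj (madj A) = A"
  by (simp add: madj_def vec_eq_iff)

lemma madj_matrix_mult: "madj (A ** B) = madj B ** madj A"
  by (simp add: madj_def vec_eq_iff matrix_matrix_mult_def cnj_sum mult.commute)

lemma madj_add: "madj (A + B) = madj A + madj B"
  and madj_diff: "madj (A - B) = madj A - madj B"
  and madj_uminus: "madj (- A) = - madj A"
  and madj_cscale: "madj (cscale c A) = cscale (cnj c) (madj A)"
  by (simp_all add: madj_def cscale_def vec_eq_iff)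

lemma madj_mat_1 [simp]: "madj (mat 1 :: complex^'n^'n) = mat 1"
  by (simp add: madj_def vec_eq_iff mat_def)

lemma cscale_mult_vec: "cscale c A *v x = c *s (A *v x)"
  by (simp add: cscale_def vec_eq_iff matrix_vector_mult_def sum_distrib_left mult_ac)

lemma of_real_smult_eq_scaleR: "complex_of_real r *s (x::complex^'n) = r *\<^sub>R x"
proof (rule vec_eq_iff[THEN iffD2, rule_format])
  fix i
  show "(complex_of_real r *s x) $ i = (r *\<^sub>R x) $ i"
    unfolding vector_smult_component vector_scaleR_component by (simp add: scaleR_conv_of_real)
qed

lemma cinner_madj_right: "cinner x (M *v y) = cinner (madj M *v x) y"
proof -
  have "cinner x (M *v y) = (\<Sum>i\<in>UNIV. \<Sum>j\<in>UNIV. cnj (x $ i) * (M $ i $ j * y $ j))"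
    by (simp add: cinner_def matrix_vector_mult_def sum_distrib_left)
  also have "\<dots> = (\<Sum>j\<in>UNIV. \<Sum>i\<in>UNIV. cnj (x $ i) * (M $ i $ j * y $ j))"
    by (rule sum.swap)
  also have "\<dots> = cinner (madj M *v x) y"
    by (simp add: cinner_def matrix_vector_mult_def madj_def cnj_sum sum_distrib_right
        sum_distrib_left mult_ac)
  finally show ?thesis .
qed

lemma cinner_madj_left: "cinner (M *v x) y = cinner x (madj M *v y)"
  using cinner_madj_right[of x "madj M" y] by simp

lemma inner_eq_Re_cinner: "(x::complex^'n) \<bullet> y = Re (cinner x y)"
  by (simp add: inner_vec_def cinner_def inner_complex_def Re_sum)

lemma cinner_zero_left [simp]: "cinner 0 y = 0"
  by (simp add: cinner_def)

lemma cinner_add_right: "cinner x (y + z) = cinner x y + cinner x z"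
  by (simp add: cinner_def sum.distrib distrib_left)

lemma cinner_self_eq_0: "cinner x x = 0 \<longleftrightarrow> x = 0"
proof
  show "cinner x x = 0 \<Longrightarrow> x = 0"
    by (metis inner_eq_Re_cinner inner_eq_zero_iff zero_complex.simps(1))
qed simp

lemma matrix_inv_left: "invertible M \<Longrightarrow> matrix_inv M ** M = mat 1"
  using someI_ex[of "\<lambda>M'. M ** M' = mat 1 \<and> M' ** M = mat 1"]
  unfolding invertible_def matrix_inv_def by auto

lemma invertible_if_madj_injective:
  fixes M :: "complex^'n^'n"
  assumes "\<And>y. madj M *v y = 0 \<Longrightarrow> y = 0"
  shows "invertible M"
proof -
  obtain X where "X ** madj M = mat 1"
    using assms matrix_left_invertible_ker by blast
  then have "M ** madj X = mat 1"
    by (metis madj_matrix_mult madj_madj madj_mat_1)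
  then show ?thesis
    using invertible_right_inverse by blast
qed

lemma orth_proj_eq_0:
  assumes "0 \<in> V" and orth: "\<And>w. w \<in> V \<Longrightarrow> cinner w x = 0"
  shows "orth_proj V x = 0"
  unfolding orth_proj_def
proof (rule the_equality)
  show "0 \<in> V \<and> (\<forall>w\<in>V. cinner w (x - 0) = 0)"
    using assms by simp
next
  fix v assume v: "v \<in> V \<and> (\<forall>w\<in>V. cinner w (x - v) = 0)"
  then have "cinner v x - cinner v v = 0"
    by (simp add: cinner_def sum_subtractf right_diff_distrib)
  then show "v = 0"
    using v orth by (simp add: cinner_self_eq_0)
qed

lemma Pperp_ker_madj: "Pperp_ker B (madj B *v y) = madj B *v y"
proof -
  have "orth_proj (kernel B) (madj B *v y) = 0"
    by (rule orth_proj_eq_0) (auto simp: kernel_def cinner_madj_left[symmetric])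
  then show ?thesis
    by (simp add: Pperp_ker_def)
qed

lemma subspace_ran: "subspace (ran (M::complex^'n^'m))"
  unfolding ran_def by (intro linear_subspace_image subspace_UNIV matrix_vector_mul_linear)

lemma inj_on_ran_madj: "inj_on ((*v) B) (ran (madj B))"
proof (rule inj_onI)
  fix w1 w2 assume "w1 \<in> ran (madj B)" "w2 \<in> ran (madj B)" and eq: "B *v w1 = B *v w2"
  then obtain u where u: "w1 - w2 = madj B *v u"
    by (auto simp: ran_def matrix_vector_mult_diff_distrib[symmetric])
  have "cinner (w1 - w2) (w1 - w2) = cinner u (B *v (w1 - w2))"
    by (simp add: u cinner_madj_left)
  also have "\<dots> = 0"
    using eq by (simp add: matrix_vector_mult_diff_distrib cinner_def)
  finally show "w1 = w2"
    by (simp add: cinner_self_eq_0)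
qed

lemma image_ran_madj: "(*v) B ` ran (madj B) = ran B"
proof
  show "(*v) B ` ran (madj B) \<subseteq> ran B"
    by (auto simp: ran_def)
next
  show "ran B \<subseteq> (*v) B ` ran (madj B)"
  proof
    fix x assume "x \<in> ran B"
    then obtain v where x: "x = B *v v"
      by (auto simp: ran_def)
    obtain w k where w: "w \<in> span (ran (madj B))"
      and k: "\<And>u. u \<in> span (ran (madj B)) \<Longrightarrow> orthogonal k u"
      and v: "v = w + k"
      using orthogonal_subspace_decomp_exists by blast
    have "madj B *v (B *v k) \<in> span (ran (madj B))"
      by (rule span_base) (simp add: ran_def)
    then have "orthogonal k (madj B *v (B *v k))"
      using k by blast
    then have "Re (cinner (B *v k) (B *v k)) = 0"
      by (simp add: orthogonal_def inner_eq_Re_cinner cinner_madj_right)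
    then have "B *v k = 0"
      by (simp add: inner_eq_Re_cinner[symmetric])
    then have "x = B *v w"
      by (simp add: x v matrix_vector_right_distrib)
    moreover have "w \<in> ran (madj B)"
      using w subspace_ran span_eq_iff by blast
    ultimately show "x \<in> (*v) B ` ran (madj B)"
      by blast
  qed
qed

lemma Lop_eqI:
  assumes "w \<in> ran (madj B)" and "B *v w = A *v Pperp_ker B x"
  shows "Lop A B x = w"
  unfolding Lop_def
proof (rule the_equality)
  show "w \<in> ran (madj B) \<and> B *v w = A *v Pperp_ker B x"
    using assms by blast
next
  fix w' assume "w' \<in> ran (madj B) \<and> B *v w' = A *v Pperp_ker B x"
  then show "w' = w"
    using assms inj_onD[OF inj_on_ran_madj] by metis
qed

lemma cinner_Lop_madj:
  assumes "self_adjoint (A ** madj B)"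
  shows "cinner (madj B *v y) (Lop A B (madj B *v y)) = cinner (madj A *v y) (madj B *v y)"
proof -
  have BA: "B ** madj A = A ** madj B"
    using assms unfolding self_adjoint_def by (metis madj_matrix_mult madj_madj)
  have "B *v (madj A *v y) \<in> (*v) B ` ran (madj B)"
    unfolding image_ran_madj by (simp add: ran_def)
  then obtain w where w: "w \<in> ran (madj B)" and "B *v w = B *v (madj A *v y)"
    by (metis imageE)
  then have Bw: "B *v w = A *v (madj B *v y)"
    by (simp add: matrix_vector_mul_assoc BA)
  have "Lop A B (madj B *v y) = w"
    by (rule Lop_eqI[OF w]) (simp add: Bw Pperp_ker_madj)
  moreover obtain u where "w = madj B *v u"
    using w by (auto simp: ran_def)
  ultimately have "cinner (madj B *v y) (Lop A B (madj B *v y)) = cinner y (B *v w)"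
    by (simp add: cinner_madj_left)
  also have "\<dots> = cinner (madj A *v y) (madj B *v y)"
    by (simp add: Bw cinner_madj_right)
  finally show ?thesis .
qed

lemma inner_madj_nonpos_if_nonpos_Lop:
  assumes "self_adjoint (A ** madj B)" and "nonpos_op (Lop A B)"
  shows "(madj A *v y) \<bullet> (madj B *v y) \<le> 0"
  using assms(2)
  unfolding nonpos_op_def inner_eq_Re_cinner cinner_Lop_madj[OF assms(1), symmetric] by blast

lemma norm_add_le_norm_diff:
  fixes x y :: "'a::real_inner"
  assumes "x \<bullet> y \<le> 0"
  shows "norm (x + y) \<le> norm (x - y)"
  unfolding norm_le using assms by (simp add: algebra_simps inner_commute)

lemma madj_add_cscale_mult_vec:
  "madj (A + cscale (complex_of_real k) B) *v y = madj A *v y + k *\<^sub>R (madj B *v y)"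
  and madj_diff_cscale_mult_vec:
  "madj (A - cscale (complex_of_real k) B) *v y = madj A *v y - k *\<^sub>R (madj B *v y)"
  by (simp_all add: madj_add madj_diff madj_cscale matrix_vector_mult_add_rdistrib
      matrix_vector_mult_diff_rdistrib cscale_mult_vec of_real_smult_eq_scaleR)

lemma norm_madj_add_cscale_le:
  assumes "(madj A *v y) \<bullet> (madj B *v y) \<le> 0" and "k \<ge> 0"
  shows "norm (madj (A + cscale (complex_of_real k) B) *v y)
    \<le> norm (madj (A - cscale (complex_of_real k) B) *v y)"
  unfolding madj_add_cscale_mult_vec madj_diff_cscale_mult_vec
  using assms by (intro norm_add_le_norm_diff) (simp add: mult_nonneg_nonpos)

lemma eq_0_if_madj_eq_0:
  assumes "range (\<lambda>(x, y). A *v x + B *v y) = UNIV"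
    and "madj A *v z = 0" and "madj B *v z = 0"
  shows "z = 0"
proof -
  obtain x y where "z = A *v x + B *v y"
    using assms(1) by (metis (no_types, lifting) UNIV_I case_prod_conv image_iff surj_pair)
  then have "cinner z z = cinner (madj A *v z) x + cinner (madj B *v z) y"
    by (simp add: cinner_add_right cinner_madj_right)
  then show ?thesis
    using assms by (simp add: cinner_self_eq_0)
qed

lemma invertible_diff_cscale:
  fixes A B :: "complex^'n^'n"
  assumes rank: "range (\<lambda>(x, y). A *v x + B *v y) = UNIV"
    and nonpos: "\<And>y. (madj A *v y) \<bullet> (madj B *v y) \<le> 0" and "k > 0"
  shows "invertible (A - cscale (complex_of_real k) B)"
proof (rule invertible_if_madj_injective)
  fix y
  let ?u = "madj A *v y" and ?v = "madj B *v y"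
  assume "madj (A - cscale (complex_of_real k) B) *v y = 0"
  then have u: "?u = k *\<^sub>R ?v"
    by (simp add: madj_diff_cscale_mult_vec)
  have "k * (?v \<bullet> ?v) \<le> 0"
    using nonpos[of y] by (simp add: u)
  then have "?v = 0"
    using \<open>k > 0\<close> by (simp add: mult_le_0_iff order_antisym_conv[OF inner_ge_zero])
  moreover from this have "?u = 0"
    using u by simp
  ultimately show "y = 0"
    by (rule eq_0_if_madj_eq_0[OF rank, rotated])
qed

lemma Sfrak_imaginary:
  "Sfrak (\<i> * complex_of_real k) A B
    = - (matrix_inv (A - cscale (complex_of_real k) B) ** (A + cscale (complex_of_real k) B))"
proof -
  have "A + cscale (\<i> * (\<i> * complex_of_real k)) B = A - cscale (complex_of_real k) B"
    "A - cscale (\<i> * (\<i> * complex_of_real k)) B = A + cscale (complex_of_real k) B"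
    by (simp_all add: cscale_def vec_eq_iff)
  then show ?thesis
    by (simp add: Sfrak_def)
qed

lemma add_cscale_mult_madj_diff_cscale:
  fixes k :: real
  assumes "self_adjoint (A ** madj B)"
  defines "M \<equiv> A - cscale (complex_of_real k) B" and "N \<equiv> A + cscale (complex_of_real k) B"
  shows "N ** madj M = M ** madj N"
proof -
  let ?c = "complex_of_real k"
  have sym: "(\<Sum>l\<in>UNIV. A$i$l * cnj (B$j$l)) = (\<Sum>l\<in>UNIV. B$i$l * cnj (A$j$l))" for i j
  proof -
    have "(A ** madj B) $ i $ j = madj (A ** madj B) $ i $ j"
      using assms(1) by (simp add: self_adjoint_def)
    then show ?thesis
      by (simp add: matrix_matrix_mult_def madj_def cnj_sum mult.commute)
  qed
  have "(N ** madj M) $ i $ j =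
     (\<Sum>l\<in>UNIV. A$i$l * cnj (A$j$l)) + ?c * (\<Sum>l\<in>UNIV. B$i$l * cnj (A$j$l))
     - ?c * (\<Sum>l\<in>UNIV. A$i$l * cnj (B$j$l)) - ?c * ?c * (\<Sum>l\<in>UNIV. B$i$l * cnj (B$j$l))"
    "(M ** madj N) $ i $ j =
     (\<Sum>l\<in>UNIV. A$i$l * cnj (A$j$l)) - ?c * (\<Sum>l\<in>UNIV. B$i$l * cnj (A$j$l))
     + ?c * (\<Sum>l\<in>UNIV. A$i$l * cnj (B$j$l)) - ?c * ?c * (\<Sum>l\<in>UNIV. B$i$l * cnj (B$j$l))" for i j
    by (simp_all add: M_def N_def matrix_matrix_mult_def madj_def cscale_def algebra_simps
        sum.distrib sum_subtractf sum_distrib_left)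
  then show ?thesis
    by (simp add: vec_eq_iff sym)
qed

lemma matrix_inv_mult_eq_madj:
  assumes inv: "invertible M" and comm: "N ** madj M = M ** madj N"
  shows "matrix_inv M ** N = madj N ** madj (matrix_inv M)"
proof -
  have "matrix_inv M ** N = matrix_inv M ** N ** madj (matrix_inv M ** M)"
    using matrix_inv_left[OF inv] by simp
  also have "\<dots> = matrix_inv M ** (N ** madj M) ** madj (matrix_inv M)"
    by (simp add: madj_matrix_mult matrix_mul_assoc)
  also have "\<dots> = (matrix_inv M ** M) ** madj N ** madj (matrix_inv M)"
    by (simp add: comm matrix_mul_assoc)
  also have "\<dots> = madj N ** madj (matrix_inv M)"
    by (simp add: matrix_inv_left[OF inv])
  finally show ?thesis .
qed

lemma self_adjoint_matrix_inv_mult: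
  assumes "invertible M" and "N ** madj M = M ** madj N"
  shows "self_adjoint (matrix_inv M ** N)"
  unfolding self_adjoint_def
  by (simp add: madj_matrix_mult matrix_inv_mult_eq_madj[OF assms])

lemma contraction_matrix_inv_mult:
  assumes inv: "invertible M" and "N ** madj M = M ** madj N"
    and le: "\<And>y. norm (madj N *v y) \<le> norm (madj M *v y)"
  shows "contraction (matrix_inv M ** N)"
  unfolding contraction_def
proof
  fix z
  define y where "y = madj (matrix_inv M) *v z"
  have "madj M *v y = z"
    using matrix_inv_left[OF inv]
    by (simp add: y_def matrix_vector_mul_assoc flip: madj_matrix_mult)
  moreover have "matrix_inv M ** N *v z = madj N *v y"
    by (simp add: matrix_inv_mult_eq_madj[OF assms(1,2)] y_def matrix_vector_mul_assoc)
  ultimately show "norm (matrix_inv M ** N *v z) \<le> norm z"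
    using le[of y] by simp
qed

lemma self_adjoint_uminus: "self_adjoint (- S) \<longleftrightarrow> self_adjoint S"
  by (simp add: self_adjoint_def madj_uminus)

lemma uminus_matrix_vector_mult: "(- M) *v x = - (M *v (x::complex^'n))"
  by (simp add: vec_eq_iff matrix_vector_mult_def sum_negf)

lemma contraction_uminus: "contraction (- S) \<longleftrightarrow> contraction S"
  by (simp add: contraction_def uminus_matrix_vector_mult)

theorem corollary2p5:
  fixes A B :: "complex^'n^'n" and \<kappa> :: real
  assumes rank: "range (\<lambda>(x, y). A *v x + B *v y) = (UNIV :: (complex^'n) set)"
    and sa: "self_adjoint (A ** madj B)"
    and kpos: "\<kappa> > 0"
    and det_ne: "det (A - cscale (complex_of_real \<kappa>) B) \<noteq> 0"
  shows "self_adjoint (Sfrak (\<i> * complex_of_real \<kappa>) A B) \<and>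
         (nonpos_op (Lop A B) \<longrightarrow>
           (\<forall>\<kappa>'::real. \<kappa>' > 0 \<longrightarrow>
              det (A - cscale (complex_of_real \<kappa>') B) \<noteq> 0 \<and>
              contraction (Sfrak (\<i> * complex_of_real \<kappa>') A B)))"
proof (intro conjI impI allI)
  show "self_adjoint (Sfrak (\<i> * complex_of_real \<kappa>) A B)"
    unfolding Sfrak_imaginary self_adjoint_uminus
    using det_ne
    by (intro self_adjoint_matrix_inv_mult add_cscale_mult_madj_diff_cscale[OF sa])
      (simp add: invertible_det_nz)
next
  fix k :: real
  assume "nonpos_op (Lop A B)" and "k > 0"
  then have nonpos: "(madj A *v y) \<bullet> (madj B *v y) \<le> 0" for y
    using inner_madj_nonpos_if_nonpos_Lop[OF sa] by blast
  have inv: "invertible (A - cscale (complex_of_real k) B)"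
    using invertible_diff_cscale[OF rank nonpos \<open>k > 0\<close>] .
  then show "det (A - cscale (complex_of_real k) B) \<noteq> 0"
    by (simp add: invertible_det_nz)
  show "contraction (Sfrak (\<i> * complex_of_real k) A B)"
    unfolding Sfrak_imaginary contraction_uminus
    using \<open>k > 0\<close>
    by (intro contraction_matrix_inv_mult inv add_cscale_mult_madj_diff_cscale[OF sa]
        norm_madj_add_cscale_le nonpos) simp
qed

end
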